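(* Let $p_1,p_2,p_3$ be distinct primes and $n_1,n_2,n_3$ be positive integers. Then $$\sum_{i=1}^3\frac{p_i^{n_i+1}-p_i}{p_i-1}\leq\frac{1}{2}\prod_{i=1}^3p_i^{n_i}.$$ *)

theory Defs
  imports Complex_Main "HOL-Computational_Algebra.Primes"
begin

end

theory Submission
  imports Defs
begin

text \<open>Each summand is \<open>p (p^n - 1)/(p - 1) \<le> 2 (p^n - 1)\<close> because \<open>p \<ge> 2\<close>, so it suffices
  to show \<open>4 (a + b + c) \<le> a b c + 12\<close> for the prime powers \<open>a, b, c\<close>. These are pairwise
  distinct integers \<open>\<ge> 2\<close>, and for sorted \<open>2 \<le> a < b < c\<close> the inequality is elementary.\<close>

lemma geometric_sum_le_twice:
  fixes x :: real
  assumes "2 \<le> x"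
  shows "(x ^ (k + 1) - x) / (x - 1) \<le> 2 * (x ^ k - 1)"
proof -
  have "1 \<le> x ^ k" using assms by (simp add: one_le_power)
  then have "x * (x ^ k - 1) \<le> 2 * (x ^ k - 1) * (x - 1)"
    using mult_right_mono[of x "2 * (x - 1)" "x ^ k - 1"] assms by (simp add: algebra_simps)
  moreover have "x ^ (k + 1) - x = x * (x ^ k - 1)" by (simp add: algebra_simps)
  ultimately show ?thesis using assms by (simp add: pos_divide_le_eq)
qed

lemma sum_le_prod_sorted:
  fixes a b c :: nat
  assumes "2 \<le> a" "a < b" "b < c"
  shows "4 * (a + b + c) \<le> a * b * c + 12"
proof -
  have "\<exists>u v w. a = 2 + u \<and> b = 3 + v \<and> c = 4 + w"
    using assms by presburger
  then obtain u v w where "a = 2 + u" "b = 3 + v" "c = 4 + w" by blast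
  \<comment> \<open>the difference of the two sides is then a polynomial in \<open>u, v, w\<close> with nonnegative coefficients\<close>
  then show ?thesis by (simp add: algebra_simps)
qed

lemma sum_le_prod_distinct:
  fixes a b c :: nat
  assumes "2 \<le> a" "2 \<le> b" "2 \<le> c" "a \<noteq> b" "a \<noteq> c" "b \<noteq> c"
  shows "4 * (a + b + c) \<le> a * b * c + 12"
proof -
  have "a < b \<and> b < c \<or> a < c \<and> c < b \<or> b < a \<and> a < c \<or> b < c \<and> c < a
        \<or> c < a \<and> a < b \<or> c < b \<and> b < a"
    using assms by linarith
  then show ?thesis
    using assms sum_le_prod_sorted[of a b c] sum_le_prod_sorted[of a c b]
      sum_le_prod_sorted[of b a c] sum_le_prod_sorted[of b c a]
      sum_le_prod_sorted[of c a b] sum_le_prod_sorted[of c b a]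
    by (auto simp: algebra_simps)
qed

lemma prime_power_ge_2:
  fixes p :: nat
  assumes "prime p" "n \<ge> 1"
  shows "2 \<le> p ^ n"
  using one_less_power[OF prime_gt_1_nat[OF assms(1)], of n] assms(2) by simp

theorem lemma2p3:
  fixes p :: "nat \<Rightarrow> nat" and n :: "nat \<Rightarrow> nat"
  assumes "\<And>i. i \<in> {1,2,3} \<Longrightarrow> prime (p i)"
    and "inj_on p {1,2,3}"
    and "\<And>i. i \<in> {1,2,3} \<Longrightarrow> n i \<ge> 1"
  shows "(\<Sum>i=1..3. (real (p i) ^ (n i + 1) - real (p i)) / (real (p i) - 1))
           \<le> (1/2) * (\<Prod>i=1..3. real (p i) ^ n i)"
proof -
  have prime: "prime (p 1)" "prime (p 2)" "prime (p 3)"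
    and exp: "n 1 \<ge> 1" "n 2 \<ge> 1" "n 3 \<ge> 1"
    and distinct: "p 1 \<noteq> p 2" "p 1 \<noteq> p 3" "p 2 \<noteq> p 3"
    using assms by (auto simp: inj_on_def)
  have "real (4 * (p 1 ^ n 1 + p 2 ^ n 2 + p 3 ^ n 3))
      \<le> real (p 1 ^ n 1 * p 2 ^ n 2 * p 3 ^ n 3 + 12)"
    unfolding of_nat_le_iff using prime exp distinct
    by (intro sum_le_prod_distinct prime_power_ge_2) (simp_all add: prime_power_inj'')
  then have key: "4 * (real (p 1) ^ n 1 + real (p 2) ^ n 2 + real (p 3) ^ n 3)
      \<le> real (p 1) ^ n 1 * real (p 2) ^ n 2 * real (p 3) ^ n 3 + 12"
    by simp
  have "(\<Sum>i=1..3. (real (p i) ^ (n i + 1) - real (p i)) / (real (p i) - 1))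
      \<le> (\<Sum>i=1..3. 2 * (real (p i) ^ n i - 1))"
  proof (rule sum_mono)
    fix i :: nat
    assume "i \<in> {1..3}"
    then have "i \<in> {1,2,3}" by auto
    then have "2 \<le> p i" using assms(1) prime_ge_2_nat by blast
    then show "(real (p i) ^ (n i + 1) - real (p i)) / (real (p i) - 1)
        \<le> 2 * (real (p i) ^ n i - 1)"
      by (intro geometric_sum_le_twice) simp
  qed
  also have "\<dots> \<le> (1/2) * (\<Prod>i=1..3. real (p i) ^ n i)"
    using key by (simp add: numeral_3_eq_3 numeral_2_eq_2)
  finally show ?thesis .
qed

end
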